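(* Let $\kappa\in[1,2]$. There exists a real-valued function $h\in C_c^\infty(\mathbb R)$ with support contained in $[0,\infty)$ such that $$\int_{-1}^{1}\overline{\widehat h(-\xi)}\,\widehat h(\xi)\,\frac{d\xi}{\xi^2+\kappa}<0.$$
   Context: $\widehat h(\xi)=\int_{\mathbb R}h(x)e^{i\xi x}\,dx$ denotes the Fourier transform (the sign convention in the exponent is immaterial here). *)

theory Defs
  imports "HOL-Analysis.Analysis"
begin

definition smooth_real :: "(real \<Rightarrow> real) \<Rightarrow> bool" where
  "smooth_real f \<longleftrightarrow> (\<exists>D :: nat \<Rightarrow> real \<Rightarrow> real. D 0 = f \<and>
      (\<forall>n x. (D n has_real_derivative D (Suc n) x) (at x)))"

definition tsupp :: "(real \<Rightarrow> real) \<Rightarrow> real set" where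
  "tsupp f = closure {x. f x \<noteq> 0}"

definition fourier :: "(real \<Rightarrow> real) \<Rightarrow> real \<Rightarrow> complex" where
  "fourier h \<xi> = integral UNIV (\<lambda>x. complex_of_real (h x) * exp (\<i> * complex_of_real (\<xi> * x)))"

end

theory Submission
  imports Defs "HOL-Computational_Algebra.Polynomial"
begin

text \<open>Take \<open>h = g'\<close> for the bump \<open>g x = exp (-1/x) * exp (-1/(1/2 - x))\<close> on \<open>(0, 1/2)\<close>.
  Integration by parts gives \<open>hat h \<xi> = -i \<xi> hat g \<xi>\<close>, and \<open>cnj (hat g (-\<xi>)) = hat g \<xi>\<close> because
  \<open>g\<close> is real, so the integrand is \<open>-\<xi>\<^sup>2 (hat g \<xi>)\<^sup>2 / (\<xi>\<^sup>2 + \<kappa>)\<close>. For \<open>|\<xi>| \<le> 1\<close> the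
  phase \<open>\<xi> x\<close> stays in \<open>[-1/2, 1/2]\<close> on the support of \<open>g \<ge> 0\<close>, so
  \<open>Re ((hat g \<xi>)\<^sup>2) \<ge> (\<integral>g)\<^sup>2 / 2\<close> and the real part of the integral is negative. The
  imaginary part vanishes because the integrand \<open>F\<close> satisfies \<open>F (-\<xi>) = cnj (F \<xi>)\<close>.\<close>

lemma smooth_real_if_derivative_closed:
  assumes "f \<in> T" and closed: "\<And>u. u \<in> T \<Longrightarrow> \<exists>v\<in>T. \<forall>x. (u has_real_derivative v x) (at x)"
  shows "smooth_real f"
proof -
  obtain next_deriv where next_deriv:
    "\<And>u. u \<in> T \<Longrightarrow> next_deriv u \<in> T \<and> (\<forall>x. (u has_real_derivative next_deriv u x) (at x))"
    using closed by metis
  have "(next_deriv ^^ n) f \<in> T" for n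
    by (induction n) (auto simp: \<open>f \<in> T\<close> next_deriv)
  then show ?thesis
    unfolding smooth_real_def by (intro exI[of _ "\<lambda>n. (next_deriv ^^ n) f"]) (simp add: next_deriv)
qed

lemma smooth_real_deriv:
  assumes "smooth_real f"
  shows "smooth_real (deriv f)" and "(f has_real_derivative deriv f x) (at x)"
proof -
  obtain D where D: "D 0 = f" "\<And>n x. (D n has_real_derivative D (Suc n) x) (at x)"
    using assms unfolding smooth_real_def by blast
  have "deriv f = D 1"
    using D by (auto intro!: DERIV_imp_deriv)
  moreover have "smooth_real (D 1)"
    unfolding smooth_real_def by (rule exI[of _ "\<lambda>n. D (Suc n)"]) (simp add: D)
  ultimately show "smooth_real (deriv f)" "(f has_real_derivative deriv f x) (at x)"
    using D by auto
qed

lemma has_real_derivative_sum_list_products: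
  assumes "\<forall>(u, v) \<in> set ps. smooth_real u \<and> smooth_real v"
  shows "((\<lambda>x. \<Sum>(u, v)\<leftarrow>ps. u x * v x) has_real_derivative
           (\<Sum>(u, v)\<leftarrow>ps. deriv u x * v x + u x * deriv v x)) (at x)"
  using assms
proof (induction ps)
  case Nil
  then show ?case by simp
next
  case (Cons p ps)
  obtain u v where p: "p = (u, v)" by fastforce
  with Cons.prems have "smooth_real u" "smooth_real v" by auto
  then have "((\<lambda>x. u x * v x) has_real_derivative deriv u x * v x + u x * deriv v x) (at x)"
    by (auto intro!: derivative_eq_intros smooth_real_deriv(2))
  with Cons show ?case
    unfolding p by (auto intro!: DERIV_add)
qed

lemma smooth_real_mult:
  assumes "smooth_real f" "smooth_real g"
  shows "smooth_real (\<lambda>x. f x * g x)"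
proof -
  \<comment> \<open>by the product rule, sums of products of smooth functions are closed under differentiation\<close>
  define T where "T = {(\<lambda>x. \<Sum>(u, v)\<leftarrow>ps. u x * v x) | ps.
                         \<forall>(u, v) \<in> set ps. smooth_real u \<and> smooth_real v}"
  have "(\<lambda>x. f x * g x) \<in> T"
    using assms unfolding T_def by (intro CollectI exI[of _ "[(f, g)]"]) auto
  moreover have "\<exists>w\<in>T. \<forall>x. (s has_real_derivative w x) (at x)" if "s \<in> T" for s
  proof -
    obtain ps where s: "s = (\<lambda>x. \<Sum>(u, v)\<leftarrow>ps. u x * v x)"
      and ps: "\<forall>(u, v) \<in> set ps. smooth_real u \<and> smooth_real v"
      using \<open>s \<in> T\<close> unfolding T_def by blast
    define qs where "qs = concat (map (\<lambda>(u, v). [(deriv u, v), (u, deriv v)]) ps)"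
    define w where "w = (\<lambda>x. \<Sum>(u, v)\<leftarrow>qs. u x * v x)"
    have "w \<in> T"
      unfolding T_def w_def
    proof (intro CollectI exI conjI)
      show "\<forall>(u, v) \<in> set qs. smooth_real u \<and> smooth_real v"
        using ps unfolding qs_def by (auto intro: smooth_real_deriv(1))
    qed (rule refl)
    moreover have "w x = (\<Sum>(u, v)\<leftarrow>ps. deriv u x * v x + u x * deriv v x)" for x
      unfolding w_def qs_def by (induction ps) auto
    then have "\<forall>x. (s has_real_derivative w x) (at x)"
      using has_real_derivative_sum_list_products[OF ps] unfolding s by presburger
    ultimately show ?thesis by blast
  qed
  ultimately show ?thesis
    by (rule smooth_real_if_derivative_closed)
qed

lemma smooth_real_compose_affine:
  assumes "smooth_real f"
  shows "smooth_real (\<lambda>x. f (a * x + b))"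
proof -
  obtain D where D: "D 0 = f" "\<And>n x. (D n has_real_derivative D (Suc n) x) (at x)"
    using assms unfolding smooth_real_def by blast
  have "((\<lambda>x. a ^ n * D n (a * x + b)) has_real_derivative a ^ Suc n * D (Suc n) (a * x + b)) (at x)"
    for n x
  proof -
    have "((\<lambda>x. D n (a * x + b)) has_real_derivative D (Suc n) (a * x + b) * a) (at x)"
      by (rule DERIV_chain2[OF D(2)]) (auto intro!: derivative_eq_intros)
    then show ?thesis
      by (auto intro!: derivative_eq_intros simp: algebra_simps)
  qed
  then show ?thesis
    unfolding smooth_real_def by (intro exI[of _ "\<lambda>n x. a ^ n * D n (a * x + b)"]) (simp add: D)
qed

lemma poly_inverse_mult_exp_tendsto_0:
  "((\<lambda>x::real. poly P (1/x) * exp (-1/x)) \<longlongrightarrow> 0) (at_right 0)"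
proof -
  have "poly P t * exp (-t) = (\<Sum>i\<le>degree P. coeff P i * (t ^ i / exp t))" for t :: real
    by (simp add: poly_altdef sum_distrib_right exp_minus divide_inverse mult.assoc)
  moreover have "((\<lambda>t::real. \<Sum>i\<le>degree P. coeff P i * (t ^ i / exp t)) \<longlongrightarrow> 0) at_top"
    using tendsto_sum[OF tendsto_mult[OF tendsto_const tendsto_power_div_exp_0]] by simp
  ultimately have "((\<lambda>t::real. poly P t * exp (-t)) \<longlongrightarrow> 0) at_top"
    by simp
  from filterlim_compose[OF this filterlim_inverse_at_top_right]
  show ?thesis by (simp add: divide_inverse exp_minus)
qed

definition flat_exp :: "real poly \<Rightarrow> real \<Rightarrow> real" where
  "flat_exp P x = (if x > 0 then poly P (1/x) * exp (-1/x) else 0)"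

lemma has_real_derivative_flat_exp:
  "(flat_exp P has_real_derivative flat_exp ([:0, 0, 1:] * (P - pderiv P)) x) (at x)"
proof -
  consider "x > 0" | "x < 0" | "x = 0" by linarith
  then show ?thesis
  proof cases
    case 1
    have "poly (pderiv P) (1/x) * (- (1 / x\<^sup>2)) * exp (-1/x) + poly P (1/x) * (exp (-1/x) * (1 / x\<^sup>2))
          = flat_exp ([:0, 0, 1:] * (P - pderiv P)) x"
      using 1 by (simp add: flat_exp_def power2_eq_square field_simps)
    then have "((\<lambda>x. poly P (1/x) * exp (-1/x)) has_real_derivative
                 flat_exp ([:0, 0, 1:] * (P - pderiv P)) x) (at x)"
      using 1 by (auto intro!: derivative_eq_intros simp: power2_eq_square mult.commute)
    then show ?thesis
      by (rule has_field_derivative_transform_within_open[of _ _ _ "{0<..}"])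
         (use 1 in \<open>auto simp: flat_exp_def\<close>)
  next
    case 2
    then have "(flat_exp P has_real_derivative 0) (at x)"
      by (intro has_field_derivative_transform_within_open[OF DERIV_const, of "{..<0}"])
         (auto simp: flat_exp_def)
    with 2 show ?thesis
      by (simp add: flat_exp_def)
  next
    case 3
    have "\<forall>\<^sub>F y in at_left 0. flat_exp P y / y = 0"
      by (rule eventually_at_leftI[of "-1"]) (auto simp: flat_exp_def)
    then have "((\<lambda>y. flat_exp P y / y) \<longlongrightarrow> 0) (at_left 0)"
      by (rule tendsto_eventually)
    moreover have "\<forall>\<^sub>F y in at_right 0. poly (pCons 0 P) (1/y) * exp (-1/y) = flat_exp P y / y"
      by (rule eventually_mono[OF eventually_at_right_less]) (simp add: flat_exp_def)
    then have "((\<lambda>y. flat_exp P y / y) \<longlongrightarrow> 0) (at_right 0)"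
      by (rule Lim_transform_eventually[OF poly_inverse_mult_exp_tendsto_0])
    ultimately have "((\<lambda>y. flat_exp P y / y) \<longlongrightarrow> 0) (at 0)"
      by (rule filterlim_split_at)
    then show ?thesis
      using 3 by (simp add: has_field_derivative_iff flat_exp_def)
  qed
qed

lemma smooth_flat_exp: "smooth_real (flat_exp P)"
  using has_real_derivative_flat_exp by (intro smooth_real_if_derivative_closed[of _ "range flat_exp"]) auto

lemma tsupp_subset:
  assumes "closed S" and "\<And>x. x \<notin> S \<Longrightarrow> f x = 0"
  shows "tsupp f \<subseteq> S"
  unfolding tsupp_def by (rule closure_minimal) (use assms in auto)

lemma compact_tsupp:
  assumes "bounded S" and "\<And>x. x \<notin> S \<Longrightarrow> f x = 0"
  shows "compact (tsupp f)"
  unfolding tsupp_def compact_closure using assms by (blast intro: bounded_subset)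

lemma DERIV_eq_0_outside:
  assumes deriv: "\<And>x. (g has_real_derivative g' x) (at x)"
    and vanish: "\<And>x. x \<notin> {a<..<b} \<Longrightarrow> g x = 0" and "x \<notin> {a..b}"
  shows "g' x = 0"
proof -
  have "(g has_real_derivative 0) (at x)"
    using assms by (intro has_field_derivative_transform_within_open[OF DERIV_const, of "{..<a} \<union> {b<..}"]) auto
  with deriv show ?thesis
    by (rule DERIV_unique)
qed

lemma fourier_eq_integral_interval:
  assumes "\<And>x. x \<notin> {a..b} \<Longrightarrow> f x = 0"
  shows "fourier f \<xi> = integral {a..b} (\<lambda>x. complex_of_real (f x) * exp (\<i> * complex_of_real (\<xi> * x)))"
proof -
  have "fourier f \<xi> = integral UNIV
          (\<lambda>x. if x \<in> {a..b} then complex_of_real (f x) * exp (\<i> * complex_of_real (\<xi> * x)) else 0)"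
    unfolding fourier_def using assms by (intro arg_cong[where f = "integral UNIV"]) auto
  also have "\<dots> = integral {a..b} (\<lambda>x. complex_of_real (f x) * exp (\<i> * complex_of_real (\<xi> * x)))"
    by (rule integral_restrict_UNIV)
  finally show ?thesis .
qed

lemma has_integral_fourier:
  assumes "continuous_on {a..b} f" and "\<And>x. x \<notin> {a..b} \<Longrightarrow> f x = 0"
  shows "((\<lambda>x. complex_of_real (f x) * exp (\<i> * complex_of_real (\<xi> * x))) has_integral fourier f \<xi>) {a..b}"
proof -
  have "(\<lambda>x. complex_of_real (f x) * exp (\<i> * complex_of_real (\<xi> * x))) integrable_on {a..b}"
    using assms(1) by (intro integrable_continuous_interval continuous_intros continuous_on_of_real)
  moreover have "fourier f \<xi> = integral {a..b} (\<lambda>x. complex_of_real (f x) * exp (\<i> * complex_of_real (\<xi> * x)))"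
    by (rule fourier_eq_integral_interval) (fact assms(2))
  ultimately show ?thesis
    by (simp add: integrable_integral)
qed

lemma cnj_fourier_uminus: "cnj (fourier f (-\<xi>)) = fourier f \<xi>"
  unfolding fourier_def integral_cnj by (simp add: exp_cnj)

lemma continuous_on_fourier:
  assumes "continuous_on {a..b} f" and "\<And>x. x \<notin> {a..b} \<Longrightarrow> f x = 0"
  shows "continuous_on S (fourier f)"
proof -
  have "continuous_on (S \<times> {a..b}) (\<lambda>(\<xi>, x). complex_of_real (f x) * exp (\<i> * complex_of_real (\<xi> * x)))"
  proof -
    have "continuous_on (S \<times> {a..b}) (\<lambda>p. f (snd p))"
      by (rule continuous_on_compose2[OF assms(1) continuous_on_snd[OF continuous_on_id]]) auto
    then show ?thesis
      by (auto simp: case_prod_beta intro!: continuous_intros continuous_on_of_real)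
  qed
  moreover have "fourier f = (\<lambda>\<xi>. integral {a..b} (\<lambda>x. complex_of_real (f x) * exp (\<i> * complex_of_real (\<xi> * x))))"
    by (intro ext fourier_eq_integral_interval) (fact assms(2))
  ultimately show ?thesis
    using integral_continuous_on_param[of S a b] by (simp add: cbox_interval)
qed

lemma has_vector_derivative_exp_imaginary:
  "((\<lambda>x. exp (\<i> * complex_of_real (\<xi> * x))) has_vector_derivative
      \<i> * complex_of_real \<xi> * exp (\<i> * complex_of_real (\<xi> * x))) (at x within S)"
proof -
  have "((\<lambda>z. exp (\<i> * (complex_of_real \<xi> * z))) has_field_derivative
          \<i> * complex_of_real \<xi> * exp (\<i> * (complex_of_real \<xi> * complex_of_real x))) (at (complex_of_real x))"
    by (auto intro!: derivative_eq_intros)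
  from has_vector_derivative_real_field[OF this, of S] show ?thesis
    by simp
qed

lemma fourier_deriv:
  assumes deriv: "\<And>x. (g has_real_derivative g' x) (at x)"
    and vanish: "\<And>x. x \<notin> {a<..<b} \<Longrightarrow> g x = 0" and "a \<le> b"
  shows "fourier g' \<xi> = - (\<i> * complex_of_real \<xi>) * fourier g \<xi>"
proof -
  define e where "e x = exp (\<i> * complex_of_real (\<xi> * x))" for x
  have g_vanish: "g x = 0" if "x \<notin> {a..b}" for x
    using that vanish by auto
  have g'_vanish: "g' x = 0" if "x \<notin> {a..b}" for x
    using deriv vanish that by (rule DERIV_eq_0_outside)
  have e_deriv: "(e has_vector_derivative \<i> * complex_of_real \<xi> * e x) (at x within S)" for x S
    unfolding e_def by (rule has_vector_derivative_exp_imaginary)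
  have "((\<lambda>x. complex_of_real (g x) * e x) has_vector_derivative
          complex_of_real (g' x) * e x + \<i> * complex_of_real \<xi> * (complex_of_real (g x) * e x)) (at x within {a..b})"
    for x
    by (rule has_vector_derivative_eq_rhs[OF has_vector_derivative_mult[OF
          has_vector_derivative_of_real[OF has_field_derivative_at_within[OF deriv]] e_deriv]])
       (simp add: algebra_simps)
  then have "((\<lambda>x. complex_of_real (g' x) * e x + \<i> * complex_of_real \<xi> * (complex_of_real (g x) * e x))
               has_integral complex_of_real (g b) * e b - complex_of_real (g a) * e a) {a..b}"
    by (intro fundamental_theorem_of_calculus \<open>a \<le> b\<close>)
  then have ftc: "((\<lambda>x. complex_of_real (g' x) * e x + \<i> * complex_of_real \<xi> * (complex_of_real (g x) * e x))
                    has_integral 0) {a..b}"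
    using vanish[of a] vanish[of b] by simp
  have "continuous_on {a..b} g"
    using deriv by (intro continuous_at_imp_continuous_on) (auto intro: DERIV_isCont)
  then have "((\<lambda>x. complex_of_real (g x) * e x) has_integral fourier g \<xi>) {a..b}"
    unfolding e_def using g_vanish by (rule has_integral_fourier)
  from has_integral_diff[OF ftc has_integral_mult_right[OF this, of "\<i> * complex_of_real \<xi>"]]
  have "((\<lambda>x. complex_of_real (g' x) * e x) has_integral - (\<i> * complex_of_real \<xi>) * fourier g \<xi>) {a..b}"
    by simp
  moreover have "fourier g' \<xi> = integral {a..b} (\<lambda>x. complex_of_real (g' x) * e x)"
    unfolding e_def by (rule fourier_eq_integral_interval) (fact g'_vanish)
  ultimately show ?thesis
    by (simp add: integral_unique)
qed

lemma Re_fourier_ge: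
  assumes cont: "continuous_on {a..b} g" and nonneg: "\<And>x. x \<in> {a..b} \<Longrightarrow> 0 \<le> g x"
    and vanish: "\<And>x. x \<notin> {a..b} \<Longrightarrow> g x = 0"
    and small_phase: "\<And>x. x \<in> {a..b} \<Longrightarrow> \<bar>\<xi> * x\<bar> \<le> 1/2"
  shows "integral {a..b} g * cos (1/2) \<le> Re (fourier g \<xi>)"
proof (rule has_integral_le)
  show "((\<lambda>x. g x * cos (1/2)) has_integral integral {a..b} g * cos (1/2)) {a..b}"
    using cont by (intro has_integral_mult_left integrable_integral integrable_continuous_interval)
  have "((\<lambda>x. complex_of_real (g x) * exp (\<i> * complex_of_real (\<xi> * x))) has_integral fourier g \<xi>) {a..b}"
    using cont vanish by (rule has_integral_fourier)
  from has_integral_Re[OF this]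
  show "((\<lambda>x. g x * cos (\<xi> * x)) has_integral Re (fourier g \<xi>)) {a..b}"
    by (simp add: Re_exp)
  fix x assume "x \<in> {a..b}"
  then have "cos (1/2) \<le> cos (\<xi> * x)"
    using small_phase[of x] pi_gt3 cos_monotone_0_pi_le[of "\<bar>\<xi> * x\<bar>" "1/2"] by simp
  with \<open>x \<in> {a..b}\<close> show "g x * cos (1/2) \<le> g x * cos (\<xi> * x)"
    by (intro mult_left_mono nonneg)
qed

lemma abs_Im_fourier_le:
  assumes cont: "continuous_on {a..b} g" and nonneg: "\<And>x. x \<in> {a..b} \<Longrightarrow> 0 \<le> g x"
    and vanish: "\<And>x. x \<notin> {a..b} \<Longrightarrow> g x = 0"
    and small_phase: "\<And>x. x \<in> {a..b} \<Longrightarrow> \<bar>\<xi> * x\<bar> \<le> 1/2"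
  shows "\<bar>Im (fourier g \<xi>)\<bar> \<le> integral {a..b} g / 2"
proof -
  have "((\<lambda>x. complex_of_real (g x) * exp (\<i> * complex_of_real (\<xi> * x))) has_integral fourier g \<xi>) {a..b}"
    using cont vanish by (rule has_integral_fourier)
  from has_integral_Im[OF this]
  have Im: "((\<lambda>x. g x * sin (\<xi> * x)) has_integral Im (fourier g \<xi>)) {a..b}"
    by (simp add: Im_exp)
  have half: "((\<lambda>x. g x / 2) has_integral integral {a..b} g / 2) {a..b}"
    using cont by (intro has_integral_divide integrable_integral integrable_continuous_interval)
  have "norm (g x * sin (\<xi> * x)) \<le> g x / 2" if "x \<in> {a..b}" for x
  proof -
    have "\<bar>sin (\<xi> * x)\<bar> \<le> 1/2"
      using abs_sin_x_le_abs_x[of "\<xi> * x"] small_phase[OF that] by linarith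
    then have "g x * \<bar>sin (\<xi> * x)\<bar> \<le> g x * (1/2)"
      by (rule mult_left_mono) (rule nonneg[OF that])
    then show ?thesis
      by (simp add: abs_mult nonneg[OF that])
  qed
  with Im half have "norm (integral {a..b} (\<lambda>x. g x * sin (\<xi> * x))) \<le> integral {a..b} (\<lambda>x. g x / 2)"
    by (intro integral_norm_bound_integral) (auto intro: has_integral_integrable)
  then show ?thesis
    using integral_unique[OF Im] integral_unique[OF half] by simp
qed

lemma cos_one_half_sq_ge: "3/4 \<le> (cos (1/2::real))\<^sup>2"
proof -
  have "\<bar>sin (1/2::real)\<bar> \<le> \<bar>1/2\<bar>"
    by (rule abs_sin_x_le_abs_x)
  then have "(sin (1/2::real))\<^sup>2 \<le> (1/2)\<^sup>2"
    unfolding abs_le_square_iff .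
  then show ?thesis
    using sin_cos_squared_add[of "1/2::real"] by (simp add: power2_eq_square)
qed

lemma Re_fourier_sq_ge:
  assumes cont: "continuous_on {a..b} g" and nonneg: "\<And>x. x \<in> {a..b} \<Longrightarrow> 0 \<le> g x"
    and vanish: "\<And>x. x \<notin> {a..b} \<Longrightarrow> g x = 0"
    and small_phase: "\<And>x. x \<in> {a..b} \<Longrightarrow> \<bar>\<xi> * x\<bar> \<le> 1/2"
  shows "(integral {a..b} g)\<^sup>2 / 2 \<le> Re ((fourier g \<xi>)\<^sup>2)"
proof -
  define G where "G = integral {a..b} g"
  have "0 \<le> G"
    unfolding G_def using cont nonneg by (intro integral_nonneg integrable_continuous_interval)
  have "G\<^sup>2 * (3/4) \<le> G\<^sup>2 * (cos (1/2))\<^sup>2"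
    using cos_one_half_sq_ge by (rule mult_left_mono) simp
  also have "\<dots> = (G * cos (1/2))\<^sup>2"
    by (simp add: power_mult_distrib)
  also have "\<dots> \<le> (Re (fourier g \<xi>))\<^sup>2"
    using Re_fourier_ge[OF assms] \<open>0 \<le> G\<close> pi_gt3 unfolding G_def
    by (intro power_mono) (auto intro!: mult_nonneg_nonneg cos_ge_zero)
  finally have "G\<^sup>2 * (3/4) \<le> (Re (fourier g \<xi>))\<^sup>2" .
  moreover have "(Im (fourier g \<xi>))\<^sup>2 \<le> (G / 2)\<^sup>2"
    using abs_Im_fourier_le[OF assms] \<open>0 \<le> G\<close>
      abs_le_square_iff[of "Im (fourier g \<xi>)" "G / 2"]
    unfolding G_def by simp
  ultimately show ?thesis
    by (simp add: G_def Re_power2 power_divide)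
qed

lemma cnj_fourier_deriv_uminus_mult:
  assumes "\<And>x. (g has_real_derivative g' x) (at x)"
    and "\<And>x. x \<notin> {a<..<b} \<Longrightarrow> g x = 0" and "a \<le> b"
  shows "cnj (fourier g' (-\<xi>)) * fourier g' \<xi> = - (complex_of_real (\<xi>\<^sup>2) * (fourier g \<xi>)\<^sup>2)"
proof -
  have "cnj (fourier g' (-\<xi>)) = - (\<i> * complex_of_real \<xi>) * fourier g \<xi>"
    using fourier_deriv[OF assms, of "-\<xi>"] cnj_fourier_uminus[of g \<xi>] by simp
  then show ?thesis
    using fourier_deriv[OF assms, of \<xi>] by (simp add: power2_eq_square algebra_simps)
qed

lemma has_integral_power2:
  fixes a b :: real
  assumes "a \<le> b"
  shows "((\<lambda>x. x\<^sup>2) has_integral (b ^ 3 - a ^ 3) / 3) {a..b}"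
proof -
  have "((\<lambda>x. x ^ 3 / 3) has_vector_derivative x\<^sup>2) (at x within {a..b})" for x :: real
    unfolding has_real_derivative_iff_has_vector_derivative[symmetric]
    by (auto intro!: derivative_eq_intros simp: power2_eq_square)
  then have "((\<lambda>x. x\<^sup>2) has_integral b ^ 3 / 3 - a ^ 3 / 3) {a..b}"
    using assms by (intro fundamental_theorem_of_calculus)
  then show ?thesis
    by (simp add: diff_divide_distrib)
qed

lemma Im_integral_eq_0_if_cnj_symmetric:
  fixes f :: "real \<Rightarrow> complex"
  assumes "\<And>x. f (-x) = cnj (f x)"
  shows "Im (integral {-c..c} f) = 0"
proof -
  have "integral {-c..c} f = integral {-c..c} (\<lambda>x. f (-x))"
    using Henstock_Kurzweil_Integration.integral_reflect_real[of c "-c" f] by simp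
  also have "\<dots> = cnj (integral {-c..c} f)"
    by (simp add: assms integral_cnj)
  finally show ?thesis
    by (simp add: complex_eq_iff)
qed

lemma Re_integral_weighted_fourier_sq_pos:
  fixes \<kappa> :: real
  assumes cont: "continuous_on {a..b} g" and nonneg: "\<And>x. x \<in> {a..b} \<Longrightarrow> 0 \<le> g x"
    and vanish: "\<And>x. x \<notin> {a..b} \<Longrightarrow> g x = 0" and small: "\<And>x. x \<in> {a..b} \<Longrightarrow> \<bar>x\<bar> \<le> 1/2"
    and "0 < integral {a..b} g" and "0 < \<kappa>"
  shows "0 < Re (integral {-1..1} (\<lambda>\<xi>. complex_of_real (\<xi>\<^sup>2 / (\<xi>\<^sup>2 + \<kappa>)) * (fourier g \<xi>)\<^sup>2))"
proof -
  define c where "c = (integral {a..b} g)\<^sup>2 / (2 * (1 + \<kappa>))"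
  define W where "W \<xi> = complex_of_real (\<xi>\<^sup>2 / (\<xi>\<^sup>2 + \<kappa>)) * (fourier g \<xi>)\<^sup>2" for \<xi>
  have pos: "0 < \<xi>\<^sup>2 + \<kappa>" for \<xi>
    using \<open>0 < \<kappa>\<close> by (simp add: add_nonneg_pos)
  have cont_W: "continuous_on {-1..1} W"
    unfolding W_def using continuous_on_fourier[OF cont vanish]
    by (intro continuous_intros continuous_on_of_real) (auto simp: pos[THEN less_imp_neq, symmetric])
  have "((\<lambda>\<xi>. \<xi>\<^sup>2 * c) has_integral 2/3 * c) {-1..1::real}"
    using has_integral_mult_left[OF has_integral_power2[of "-1" 1], of c] by simp
  moreover have "((\<lambda>\<xi>. Re (W \<xi>)) has_integral Re (integral {-1..1} W)) {-1..1}"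
    using cont_W by (intro has_integral_Re integrable_integral integrable_continuous_interval)
  moreover have "\<xi>\<^sup>2 * c \<le> Re (W \<xi>)" if "\<xi> \<in> {-1..1}" for \<xi>
  proof -
    have phase: "\<bar>\<xi> * x\<bar> \<le> 1/2" if "x \<in> {a..b}" for x
      using mult_mono[of "\<bar>\<xi>\<bar>" 1 "\<bar>x\<bar>" "1/2"] \<open>\<xi> \<in> {-1..1}\<close> small[OF that] by (auto simp: abs_mult)
    have "(integral {a..b} g)\<^sup>2 / 2 \<le> Re ((fourier g \<xi>)\<^sup>2)"
      using cont nonneg vanish phase by (rule Re_fourier_sq_ge)
    moreover have "\<xi>\<^sup>2 / (1 + \<kappa>) \<le> \<xi>\<^sup>2 / (\<xi>\<^sup>2 + \<kappa>)"
      using \<open>\<xi> \<in> {-1..1}\<close> \<open>0 < \<kappa>\<close> pos[of \<xi>]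
      by (intro divide_left_mono) (auto simp: abs_square_le_1)
    ultimately have "\<xi>\<^sup>2 / (1 + \<kappa>) * ((integral {a..b} g)\<^sup>2 / 2) \<le> \<xi>\<^sup>2 / (\<xi>\<^sup>2 + \<kappa>) * Re ((fourier g \<xi>)\<^sup>2)"
      using \<open>0 < \<kappa>\<close> by (intro mult_mono) auto
    then show ?thesis
      by (simp add: W_def c_def mult.commute)
  qed
  ultimately have "2/3 * c \<le> Re (integral {-1..1} W)"
    by (rule has_integral_le)
  moreover have "0 < c"
    unfolding c_def using \<open>0 < integral {a..b} g\<close> \<open>0 < \<kappa>\<close> by simp
  ultimately show ?thesis
    unfolding W_def by linarith
qed

definition bump :: "real \<Rightarrow> real" where
  "bump x = flat_exp 1 x * flat_exp 1 (1/2 - x)"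

lemma smooth_bump: "smooth_real bump"
proof -
  have "smooth_real (\<lambda>x. flat_exp 1 ((-1) * x + 1/2))"
    by (rule smooth_real_compose_affine[OF smooth_flat_exp])
  then show ?thesis
    unfolding bump_def[abs_def] by (intro smooth_real_mult smooth_flat_exp) simp
qed

lemma bump_nonneg: "0 \<le> bump x"
  by (simp add: bump_def flat_exp_def)

lemma bump_pos: "x \<in> {0<..<1/2} \<Longrightarrow> 0 < bump x"
  by (simp add: bump_def flat_exp_def)

lemma bump_eq_0: "x \<notin> {0<..<1/2} \<Longrightarrow> bump x = 0"
  by (auto simp: bump_def flat_exp_def)

lemma continuous_on_bump: "continuous_on S bump"
  using smooth_real_deriv(2)[OF smooth_bump]
  by (intro continuous_at_imp_continuous_on) (auto intro: DERIV_isCont)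

lemma integral_bump_pos: "0 < integral {0..1/2} bump"
proof -
  have "integral {0..1/2::real} (\<lambda>_. 0) < integral {0..1/2} bump"
    by (intro integral_less_real continuous_on_bump continuous_on_const) (auto intro: bump_pos)
  then show ?thesis by simp
qed

theorem lemma3p3:
  fixes \<kappa> :: real
  assumes "1 \<le> \<kappa>" and "\<kappa> \<le> 2"
  shows "\<exists>h :: real \<Rightarrow> real. smooth_real h \<and> compact (tsupp h) \<and> tsupp h \<subseteq> {0..} \<and>
    (let I = integral {-1..1::real}
       (\<lambda>\<xi>. cnj (fourier h (-\<xi>)) * fourier h \<xi> / complex_of_real (\<xi>\<^sup>2 + \<kappa>))
     in Im I = 0 \<and> Re I < 0)"
proof (intro exI[of _ "deriv bump"] conjI)
  have bump_deriv: "(bump has_real_derivative deriv bump x) (at x)" for x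
    using smooth_real_deriv(2)[OF smooth_bump] .
  have deriv_vanish: "deriv bump x = 0" if "x \<notin> {0..1/2}" for x
    using bump_deriv bump_eq_0 that by (rule DERIV_eq_0_outside)
  show "smooth_real (deriv bump)"
    using smooth_real_deriv(1)[OF smooth_bump] .
  show "compact (tsupp (deriv bump))"
    using deriv_vanish by (intro compact_tsupp[of "{0..1/2}"]) auto
  show "tsupp (deriv bump) \<subseteq> {0..}"
    using tsupp_subset[of "{0..1/2}" "deriv bump"] deriv_vanish by auto
  let ?F = "\<lambda>\<xi>. cnj (fourier (deriv bump) (-\<xi>)) * fourier (deriv bump) \<xi> / complex_of_real (\<xi>\<^sup>2 + \<kappa>)"
  have "Im (integral {-1..1} ?F) = 0"
    using Im_integral_eq_0_if_cnj_symmetric[of ?F 1] by (simp add: mult.commute)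
  moreover have "?F \<xi> = - (complex_of_real (\<xi>\<^sup>2 / (\<xi>\<^sup>2 + \<kappa>)) * (fourier bump \<xi>)\<^sup>2)" for \<xi>
    using cnj_fourier_deriv_uminus_mult[OF bump_deriv bump_eq_0, of 0 "1/2" \<xi>] by simp
  \<comment> \<open>of the bounds on \<open>\<kappa>\<close> only \<open>0 < \<kappa>\<close> is needed\<close>
  moreover have "0 < Re (integral {-1..1} (\<lambda>\<xi>. complex_of_real (\<xi>\<^sup>2 / (\<xi>\<^sup>2 + \<kappa>)) * (fourier bump \<xi>)\<^sup>2))"
    using assms integral_bump_pos
    by (intro Re_integral_weighted_fourier_sq_pos) (auto intro: continuous_on_bump bump_nonneg bump_eq_0)
  ultimately show "let I = integral {-1..1} ?F in Im I = 0 \<and> Re I < 0"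
    by (simp add: integral_neg)
qed

end
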